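(* Assume $F=f+h$ attains its minimum at some $x^*$, let $F^*=F(x^* )$, and consider the Regularized Composite Tensor Method $x_0\in\operatorname{dom}h$, $x_{k+1}=T_H(x_k)$, $k\ge0$, with $H=pL_p$. Assume $D=\sup_{x\in\operatorname{dom}h}\{\|x-x^*\|:F(x)\le F(x_0)\}<+\infty$. Then $$F(x_k)-F^*\le\frac{(p+1)(2p)^p}{p!}\cdot\frac{L_pD^{p+1}}{(k-1)^p},\qquad k\ge2.$$
   Context: $\mathbb{E}$ is a finite-dimensional real vector space with dual $\mathbb{E}^*$; $B:\mathbb{E}\to\mathbb{E}^*$ is a fixed self-adjoint positive-definite operator, $\|x\|=\langle Bx,x\rangle^{1/2}$, $\|g\|_*=\langle g,B^{-1}g\rangle^{1/2}$. Let $p\ge 2$ be an integer, $h:\mathbb{E}\to\mathbb{R}\cup\{+\infty\}$ proper closed convex, and $f$ convex and $p$ times differentiable on an open convex set containing $\operatorname{dom}h$, with $\|D^pf(x)-D^pf(y)\|\le L_p\|x-y\|$ for $x,y\in\operatorname{dom}h$, $0<L_p<\infty$, where for a symmetric $p$-linear form $\|A\|=\max_{\|u\|\le1}|A[u]^p|$. $F=f+h$. Taylor polynomial $\Omega_p(f,x;y)=f(x)+\sum_{k=1}^p\frac1{k!}D^kf(x)[y-x]^k$. For $x\in\operatorname{dom}h$, $T_H(x)=\arg\min_{y\in\mathbb{E}}\{\Omega_p(f,x;y)+\frac{H}{(p+1)!}\|y-x\|^{p+1}+h(y)\}$. *)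

theory Defs
  imports "HOL-Analysis.Analysis"
begin

text \<open>The operator B : E \<rightarrow> E* is represented, after identifying E* with E through the
inner product of the Euclidean type, as a linear self-adjoint positive-definite map.\<close>

definition pos_def_op :: "('a::euclidean_space \<Rightarrow> 'a) \<Rightarrow> bool" where
  "pos_def_op B \<longleftrightarrow> linear B \<and> (\<forall>x y. inner (B x) y = inner x (B y))
     \<and> (\<forall>x. x \<noteq> 0 \<longrightarrow> inner (B x) x > 0)"

definition bnorm :: "('a::euclidean_space \<Rightarrow> 'a) \<Rightarrow> 'a \<Rightarrow> real" where
  "bnorm B x = sqrt (inner (B x) x)"

definition dom_fun :: "('a \<Rightarrow> ereal) \<Rightarrow> 'a set" where
  "dom_fun h = {x. h x < \<infinity>}"

definition proper_closed_convex :: "('a::euclidean_space \<Rightarrow> ereal) \<Rightarrow> bool" where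
  "proper_closed_convex h \<longleftrightarrow>
     (\<forall>x. h x \<noteq> -\<infinity>) \<and> (\<exists>x. h x < \<infinity>)
     \<and> closed {(x, t::real). h x \<le> ereal t}
     \<and> convex {(x, t::real). h x \<le> ereal t}"

text \<open>Df k x us represents the k-linear form D^k f(x) applied to the arguments us
(a list of length k).  "p times differentiable on U" with these derivatives:\<close>

definition higher_derivs :: "nat \<Rightarrow> ('a::euclidean_space \<Rightarrow> real) \<Rightarrow>
    (nat \<Rightarrow> 'a \<Rightarrow> 'a list \<Rightarrow> real) \<Rightarrow> 'a set \<Rightarrow> bool" where
  "higher_derivs p f Df U \<longleftrightarrow>
     (\<forall>x\<in>U. Df 0 x [] = f x) \<and>
     (\<forall>k<p. \<forall>x\<in>U. \<forall>us. length us = k \<longrightarrow>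
        ((\<lambda>y. Df k y us) has_derivative (\<lambda>v. Df (Suc k) x (v # us))) (at x))"

definition taylor_poly :: "nat \<Rightarrow> ('a::euclidean_space \<Rightarrow> real) \<Rightarrow>
    (nat \<Rightarrow> 'a \<Rightarrow> 'a list \<Rightarrow> real) \<Rightarrow> 'a \<Rightarrow> 'a \<Rightarrow> real" where
  "taylor_poly p f Df x y =
     f x + (\<Sum>k = 1..p. Df k x (replicate k (y - x)) / fact k)"

definition tensor_model :: "nat \<Rightarrow> ('a::euclidean_space \<Rightarrow> 'a) \<Rightarrow> ('a \<Rightarrow> real) \<Rightarrow>
    (nat \<Rightarrow> 'a \<Rightarrow> 'a list \<Rightarrow> real) \<Rightarrow> ('a \<Rightarrow> ereal) \<Rightarrow> real \<Rightarrow> 'a \<Rightarrow> 'a \<Rightarrow> ereal" where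
  "tensor_model p B f Df h H x y =
     ereal (taylor_poly p f Df x y + H / fact (p + 1) * bnorm B (y - x) ^ (p + 1)) + h y"

definition is_tensor_step :: "nat \<Rightarrow> ('a::euclidean_space \<Rightarrow> 'a) \<Rightarrow> ('a \<Rightarrow> real) \<Rightarrow>
    (nat \<Rightarrow> 'a \<Rightarrow> 'a list \<Rightarrow> real) \<Rightarrow> ('a \<Rightarrow> ereal) \<Rightarrow> real \<Rightarrow> 'a \<Rightarrow> 'a \<Rightarrow> bool" where
  "is_tensor_step p B f Df h H x y \<longleftrightarrow>
     (\<forall>z. tensor_model p B f Df h H x y \<le> tensor_model p B f Df h H x z)"

end

theory Submission
  imports Defs
begin

text \<open>Taylor's formula with integral remainder and the Lipschitz continuity of the p-th derivative
  give |f y - Omega_p(f,x;y)| <= L/(p+1)! ||y - x||^(p+1). With H = p L the tensor model therefore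
  majorizes F, and its minimizer x' satisfies F x' <= F y + L/p! ||y - x||^(p+1) for every y.
  The iterates stay in the initial sublevel set, so ||x_k - x*|| <= D; testing with
  y = (1 - t) x_k + t x* and using convexity gives, for the gaps d_k = F x_k - F*,
  d_(k+1) <= (1 - t) d_k + (L D^(p+1) / p!) t^(p+1) for all t in [0, 1]. The choice t = 2p/k and
  Bernoulli's inequality turn this recurrence into the rate by induction on k.\<close>

lemma bnorm_nonneg:
  assumes "pos_def_op B"
  shows "0 \<le> bnorm B v"
proof (cases "v = 0")
  case True
  then show ?thesis
    using assms by (simp add: bnorm_def pos_def_op_def linear_0)
next
  case False
  then show ?thesis
    using assms by (auto simp: bnorm_def pos_def_op_def less_imp_le)
qed

lemma bnorm_eq_0_iff:
  assumes "pos_def_op B"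
  shows "bnorm B v = 0 \<longleftrightarrow> v = 0"
  using assms by (auto simp: bnorm_def pos_def_op_def linear_0 dest: spec[of _ v])

lemma bnorm_scaleR:
  assumes "pos_def_op B"
  shows "bnorm B (c *\<^sub>R v) = \<bar>c\<bar> * bnorm B v"
proof -
  have "B (c *\<^sub>R v) = c *\<^sub>R B v"
    using assms by (simp add: pos_def_op_def linear_scale)
  then show ?thesis
    by (simp add: bnorm_def real_sqrt_mult power2_eq_square)
qed

lemma bnorm_minus_commute:
  assumes "pos_def_op B"
  shows "bnorm B (a - b) = bnorm B (b - a)"
  using bnorm_scaleR[OF assms, of "-1" "b - a"] by simp

lemma proper_closed_convex_finite:
  assumes "proper_closed_convex h" "x \<in> dom_fun h"
  shows "h x = ereal (real_of_ereal (h x))"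
  using assms by (cases "h x") (auto simp: proper_closed_convex_def dom_fun_def)

lemma proper_closed_convex_ineq:
  assumes h: "proper_closed_convex h" and a: "a \<in> dom_fun h" and b: "b \<in> dom_fun h"
    and t: "0 \<le> t" "t \<le> 1"
  shows "h ((1 - t) *\<^sub>R a + t *\<^sub>R b)
           \<le> ereal ((1 - t) * real_of_ereal (h a) + t * real_of_ereal (h b))"
proof -
  let ?epi = "{(x, s::real). h x \<le> ereal s}"
  have "convex ?epi"
    using h by (simp add: proper_closed_convex_def)
  moreover have "(a, real_of_ereal (h a)) \<in> ?epi" "(b, real_of_ereal (h b)) \<in> ?epi"
    using proper_closed_convex_finite[OF h] a b by (metis case_prod_conv mem_Collect_eq order_refl)+
  ultimately have "(1 - t) *\<^sub>R (a, real_of_ereal (h a)) + t *\<^sub>R (b, real_of_ereal (h b)) \<in> ?epi"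
    using t by (intro convexD) auto
  then show ?thesis
    by simp
qed

lemma convex_dom_fun:
  assumes "proper_closed_convex h"
  shows "convex (dom_fun h)"
proof (rule convexI)
  fix a b and u v :: real
  assume "a \<in> dom_fun h" "b \<in> dom_fun h" "0 \<le> u" "0 \<le> v" "u + v = 1"
  moreover from this have "u = 1 - v"
    by simp
  ultimately have "h (u *\<^sub>R a + v *\<^sub>R b) < \<infinity>"
    using proper_closed_convex_ineq[OF assms, of a b v] by (auto intro: order.strict_trans1)
  then show "u *\<^sub>R a + v *\<^sub>R b \<in> dom_fun h"
    by (simp add: dom_fun_def)
qed

lemma higher_derivs_replicate_scaleR:
  assumes fd: "higher_derivs p f Df U" and U: "open U"
  shows "k \<le> p \<Longrightarrow> z \<in> U \<Longrightarrow>
           Df k z (replicate k (c *\<^sub>R v)) = c ^ k * Df k z (replicate k v)"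
proof (induction k arbitrary: z)
  case 0
  then show ?case by simp
next
  case (Suc k)
  have derivs: "((\<lambda>y. Df k y (replicate k w)) has_derivative
       (\<lambda>u. Df (Suc k) z (u # replicate k w))) (at z)" for w
    using fd Suc.prems unfolding higher_derivs_def by auto
  have "((\<lambda>y. c ^ k * Df k y (replicate k v)) has_derivative
       (\<lambda>u. Df (Suc k) z (u # replicate k (c *\<^sub>R v)))) (at z)"
    using Suc.IH Suc.prems
    by (intro has_derivative_transform_within_open[OF derivs U Suc.prems(2)]) simp
  moreover have "((\<lambda>y. c ^ k * Df k y (replicate k v)) has_derivative
       (\<lambda>u. c ^ k * Df (Suc k) z (u # replicate k v))) (at z)"
    by (rule has_derivative_mult_right[OF derivs])
  ultimately have "(\<lambda>u. Df (Suc k) z (u # replicate k (c *\<^sub>R v)))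
      = (\<lambda>u. c ^ k * Df (Suc k) z (u # replicate k v))"
    by (rule has_derivative_unique)
  moreover have
    "Df (Suc k) z ((c *\<^sub>R v) # replicate k v) = c * Df (Suc k) z (v # replicate k v)"
    using linear_scale[OF has_derivative_linear[OF derivs]] by simp
  ultimately show ?case
    by (metis mult.assoc mult.commute power_Suc replicate_Suc)
qed

lemma higher_derivs_line_has_vector_derivative:
  assumes fd: "higher_derivs p f Df U" and "m < p" and "x + s *\<^sub>R v \<in> U"
  shows "((\<lambda>s. Df m (x + s *\<^sub>R v) (replicate m v)) has_vector_derivative
           Df (Suc m) (x + s *\<^sub>R v) (replicate (Suc m) v)) (at s within T)"
proof -
  let ?z = "x + s *\<^sub>R v"
  have deriv: "((\<lambda>w. Df m w (replicate m v)) has_derivative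
      (\<lambda>u. Df (Suc m) ?z (u # replicate m v))) (at ?z)"
    using assms unfolding higher_derivs_def by auto
  have "((\<lambda>s. x + s *\<^sub>R v) has_derivative (\<lambda>t. t *\<^sub>R v)) (at s within T)"
    by (auto intro!: derivative_eq_intros)
  from has_derivative_compose[OF this deriv]
  have "((\<lambda>s. Df m (x + s *\<^sub>R v) (replicate m v)) has_derivative
      (\<lambda>t. Df (Suc m) ?z ((t *\<^sub>R v) # replicate m v))) (at s within T)"
    by (simp add: o_def)
  moreover have "Df (Suc m) ?z ((t *\<^sub>R v) # replicate m v)
      = t *\<^sub>R Df (Suc m) ?z (replicate (Suc m) v)" for t
    using linear_scale[OF has_derivative_linear[OF deriv]] by simp
  ultimately show ?thesis
    by (simp add: has_vector_derivative_def)
qed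

lemma higher_derivs_Lipschitz_replicate:
  assumes B: "pos_def_op B" and fd: "higher_derivs p f Df U" and U: "open U" "S \<subseteq> U"
    and Lip: "\<forall>y\<in>S. \<forall>z\<in>S. \<forall>u. bnorm B u \<le> 1 \<longrightarrow>
              \<bar>Df p y (replicate p u) - Df p z (replicate p u)\<bar> \<le> L * bnorm B (y - z)"
    and yz: "y \<in> S" "z \<in> S"
  shows "\<bar>Df p y (replicate p v) - Df p z (replicate p v)\<bar> \<le> L * bnorm B (y - z) * bnorm B v ^ p"
proof (cases "v = 0")
  case True
  show ?thesis
  proof (cases "p = 0")
    case True
    then show ?thesis
      using Lip[rule_format, OF yz, of 0] bnorm_eq_0_iff[OF B, of 0] \<open>v = 0\<close> by simp
  next
    case False
    then have "Df p w (replicate p v) = 0" if "w \<in> S" for w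
      using higher_derivs_replicate_scaleR[OF fd U(1), of p w 0 0] that U \<open>v = 0\<close>
      by (auto simp: power_0_left)
    then show ?thesis
      using yz False \<open>v = 0\<close> bnorm_eq_0_iff[OF B, of 0] by (simp add: power_0_left)
  qed
next
  case False
  define n where "n = bnorm B v"
  have "n > 0"
    using False bnorm_nonneg[OF B] bnorm_eq_0_iff[OF B] by (auto simp: n_def less_le)
  define u where "u = (1 / n) *\<^sub>R v"
  have v: "v = n *\<^sub>R u" and u: "bnorm B u = 1"
    using \<open>n > 0\<close> bnorm_scaleR[OF B] by (simp_all add: u_def n_def)
  have "Df p w (replicate p v) = n ^ p * Df p w (replicate p u)" if "w \<in> S" for w
    using higher_derivs_replicate_scaleR[OF fd U(1), of p w n u] that U v by auto
  then have "\<bar>Df p y (replicate p v) - Df p z (replicate p v)\<bar>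
      = n ^ p * \<bar>Df p y (replicate p u) - Df p z (replicate p u)\<bar>"
    using yz \<open>n > 0\<close> by (simp add: right_diff_distrib[symmetric] abs_mult)
  also have "\<dots> \<le> n ^ p * (L * bnorm B (y - z))"
    using Lip yz u \<open>n > 0\<close> by (intro mult_left_mono) auto
  finally show ?thesis
    by (simp add: n_def mult.commute)
qed

lemma has_integral_one_minus_power_div_fact:
  "((\<lambda>s. (1 - s) ^ n / fact n) has_integral 1 / fact (Suc n)) {0..1::real}"
proof -
  define A where "A s = - ((1 - s) ^ Suc n) / fact (Suc n)" for s :: real
  have "((\<lambda>s. (1 - s) ^ n / fact n) has_integral A 1 - A 0) {0..1::real}"
  proof (rule fundamental_theorem_of_calculus)
    fix s :: real
    show "(A has_vector_derivative (1 - s) ^ n / fact n) (at s within {0..1})"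
      unfolding A_def has_real_derivative_iff_has_vector_derivative[symmetric]
      by (rule derivative_eq_intros refl | simp del: of_nat_Suc)+
  qed simp
  then show ?thesis
    by (simp add: A_def)
qed

lemma has_integral_one_minus_power_div_fact_times_id:
  "((\<lambda>s. (1 - s) ^ n / fact n * s) has_integral 1 / fact (Suc (Suc n))) {0..1::real}"
proof -
  have "(1 - s) ^ n / fact n * s
      = (1 - s) ^ n / fact n - real (Suc n) * ((1 - s) ^ Suc n / fact (Suc n))"
    for s :: real
    by (simp add: field_simps del: of_nat_Suc)
  moreover have "((\<lambda>s. (1 - s) ^ n / fact n - real (Suc n) * ((1 - s) ^ Suc n / fact (Suc n)))
      has_integral 1 / fact (Suc n) - real (Suc n) * (1 / fact (Suc (Suc n)))) {0..1}"
    by (intro has_integral_diff has_integral_mult_right has_integral_one_minus_power_div_fact)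
  moreover have
    "1 / fact (Suc n) - real (Suc n) * (1 / fact (Suc (Suc n))) = (1 / fact (Suc (Suc n)) :: real)"
    by (simp add: divide_simps del: of_nat_Suc)
  ultimately show ?thesis
    by simp
qed

lemma taylor_remainder_bound:
  fixes g :: "nat \<Rightarrow> real \<Rightarrow> real"
  assumes "0 < p"
    and der: "\<And>m s. m < p \<Longrightarrow> 0 \<le> s \<Longrightarrow> s \<le> 1 \<Longrightarrow>
                (g m has_vector_derivative g (Suc m) s) (at s within {0..1})"
    and Lip: "\<And>s. 0 \<le> s \<Longrightarrow> s \<le> 1 \<Longrightarrow> \<bar>g p s - g p 0\<bar> \<le> K * s"
  shows "\<bar>g 0 1 - (\<Sum>k\<le>p. g k 0 / fact k)\<bar> \<le> K / fact (p + 1)"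
proof -
  have p: "Suc (p - 1) = p"
    using \<open>0 < p\<close> by simp
  define w where "w s = (1 - s) ^ (p - 1) / fact (p - 1)" for s :: real
  have "((\<lambda>s. ((1 - s) ^ (p - 1) / fact (p - 1)) *\<^sub>R g p s) has_integral
      g 0 1 - (\<Sum>k<p. ((1 - 0) ^ k / fact k) *\<^sub>R g k 0)) {0..1}"
    by (rule Taylor_has_integral) (use assms in auto)
  then have "((\<lambda>s. w s * g p s) has_integral g 0 1 - (\<Sum>k<p. g k 0 / fact k)) {0..1}"
    by (simp add: w_def)
  moreover have "((\<lambda>s. w s * g p 0) has_integral g p 0 / fact p) {0..1}"
    using has_integral_mult_left[OF has_integral_one_minus_power_div_fact[of "p - 1"]] p
    by (simp add: w_def)
  ultimately have "((\<lambda>s. w s * g p s - w s * g p 0) has_integral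
      g 0 1 - (\<Sum>k<p. g k 0 / fact k) - g p 0 / fact p) {0..1}"
    by (rule has_integral_diff)
  then have "((\<lambda>s. w s * (g p s - g p 0)) has_integral
      g 0 1 - (\<Sum>k\<le>p. g k 0 / fact k)) {0..1}"
    by (simp add: right_diff_distrib diff_diff_eq flip: lessThan_Suc_atMost)
  moreover have "((\<lambda>s. K * (w s * s)) has_integral K / fact (p + 1)) {0..1}"
    using has_integral_mult_right[OF has_integral_one_minus_power_div_fact_times_id[of "p - 1"]] p
    by (simp add: w_def)
  moreover have "norm (w s * (g p s - g p 0)) \<le> (K * (w s * s)) \<bullet> 1" if "s \<in> {0..1}" for s
  proof -
    have "0 \<le> w s"
      using that by (simp add: w_def)
    then have "w s * \<bar>g p s - g p 0\<bar> \<le> w s * (K * s)"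
      using Lip[of s] that by (intro mult_left_mono) auto
    then show ?thesis
      using \<open>0 \<le> w s\<close> by (simp add: abs_mult mult.left_commute)
  qed
  ultimately have "norm (g 0 1 - (\<Sum>k\<le>p. g k 0 / fact k)) \<le> (K / fact (p + 1)) \<bullet> 1"
    by (rule has_integral_norm_bound_integral_component)
  then show ?thesis
    by simp
qed

lemma taylor_poly_eq_sum:
  assumes "higher_derivs p f Df U" "x \<in> U"
  shows "taylor_poly p f Df x y = (\<Sum>k\<le>p. Df k x (replicate k (y - x)) / fact k)"
  using assms
  by (simp add: taylor_poly_def higher_derivs_def atMost_atLeast0 sum.atLeast_Suc_atMost)

lemma taylor_poly_error_bound:
  assumes B: "pos_def_op B" and fd: "higher_derivs p f Df U" and "0 < p"
    and U: "open U" and S: "convex S" "S \<subseteq> U"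
    and Lip: "\<forall>y\<in>S. \<forall>z\<in>S. \<forall>u. bnorm B u \<le> 1 \<longrightarrow>
              \<bar>Df p y (replicate p u) - Df p z (replicate p u)\<bar> \<le> L * bnorm B (y - z)"
    and xy: "x \<in> S" "y \<in> S"
  shows "\<bar>f y - taylor_poly p f Df x y\<bar> \<le> L / fact (p + 1) * bnorm B (y - x) ^ (p + 1)"
proof -
  define v where "v = y - x"
  define g where "g m s = Df m (x + s *\<^sub>R v) (replicate m v)" for m s
  have segment: "x + s *\<^sub>R v \<in> S" if "0 \<le> s" "s \<le> 1" for s
    using convexD_alt[OF S(1) xy that] by (simp add: v_def algebra_simps)
  have "\<bar>g 0 1 - (\<Sum>k\<le>p. g k 0 / fact k)\<bar> \<le> L * bnorm B v ^ (p + 1) / fact (p + 1)"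
  proof (rule taylor_remainder_bound[OF \<open>0 < p\<close>])
    fix m :: nat and s :: real
    show "m < p \<Longrightarrow> 0 \<le> s \<Longrightarrow> s \<le> 1 \<Longrightarrow>
        (g m has_vector_derivative g (Suc m) s) (at s within {0..1})"
      unfolding g_def using segment S(2)
      by (intro higher_derivs_line_has_vector_derivative[OF fd]) auto
  next
    fix s :: real
    assume "0 \<le> s" "s \<le> 1"
    then have "\<bar>g p s - g p 0\<bar> \<le> L * bnorm B (s *\<^sub>R v) * bnorm B v ^ p"
      unfolding g_def using segment xy
      by (intro order.trans[OF higher_derivs_Lipschitz_replicate[OF B fd U S(2) Lip]]) auto
    then show "\<bar>g p s - g p 0\<bar> \<le> L * bnorm B v ^ (p + 1) * s"
      using bnorm_scaleR[OF B, of s v] \<open>0 \<le> s\<close> by (simp add: algebra_simps)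
  qed
  moreover have "g 0 1 = f y" "(\<Sum>k\<le>p. g k 0 / fact k) = taylor_poly p f Df x y"
    using fd xy S(2) taylor_poly_eq_sum[OF fd] by (auto simp: g_def v_def higher_derivs_def)
  ultimately show ?thesis
    by (simp add: v_def)
qed

lemma sublinear_rate_step:
  fixes k C :: real
  assumes p: "1 \<le> p" and C: "0 \<le> C" and k: "2 * real p < k"
  shows "(1 - 2 * real p / k) * ((real p + 1) * (2 * real p) ^ p * C / (k - 1) ^ p)
           + C * (2 * real p / k) ^ (p + 1)
         \<le> (real p + 1) * (2 * real p) ^ p * C / k ^ p"
proof -
  define P where "P = real p"
  have P: "1 \<le> P" "2 * P < k" and "k > 1"
    using p k by (simp_all add: P_def)
  have "1 + P * (- 1 / k) \<le> (1 + (- 1 / k)) ^ p"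
    unfolding P_def using \<open>k > 1\<close> by (intro Bernoulli_inequality) simp
  then have Bernoulli: "k ^ p * (k - P) \<le> k * (k - 1) ^ p"
    using \<open>k > 1\<close> by (simp add: power_divide field_simps)
  have "0 \<le> (P * P - P) * k + 2 * P * P"
    using P \<open>k > 1\<close> by (simp add: mult_right_mono)
  moreover have "((P + 1) * k - 2 * P) * (k - P) - (P + 1) * (k - 2 * P) * k
      = (P * P - P) * k + 2 * P * P"
    by (simp add: algebra_simps)
  ultimately have "(P + 1) * (k - 2 * P) * k * k ^ p \<le> ((P + 1) * k - 2 * P) * (k - P) * k ^ p"
    using \<open>k > 1\<close> by (intro mult_right_mono) auto
  also have "\<dots> \<le> ((P + 1) * k - 2 * P) * (k * (k - 1) ^ p)"
  proof -
    have "0 \<le> P * k" "(P + 1) * k = P * k + k"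
      using P \<open>k > 1\<close> by (simp_all add: algebra_simps)
    then have "2 * P \<le> (P + 1) * k"
      using P by linarith
    then show ?thesis
      using Bernoulli by (subst mult.assoc, intro mult_left_mono) (auto simp: mult.commute)
  qed
  finally have "k * ((P + 1) * (k - 2 * P) * k ^ p) \<le> k * (((P + 1) * k - 2 * P) * (k - 1) ^ p)"
    by (simp add: algebra_simps)
  then have "(P + 1) * (k - 2 * P) * k ^ p \<le> ((P + 1) * k - 2 * P) * (k - 1) ^ p"
    using \<open>k > 1\<close> by simp
  then have key:
    "(P + 1) * (k - 2 * P) * k ^ p + 2 * P * (k - 1) ^ p \<le> (P + 1) * k * (k - 1) ^ p"
    by (simp add: algebra_simps)
  have "(1 - 2 * P / k) * ((P + 1) * (2 * P) ^ p * C / (k - 1) ^ p) + C * (2 * P / k) ^ (p + 1)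
      = (2 * P) ^ p * C * ((P + 1) * (k - 2 * P) * k ^ p + 2 * P * (k - 1) ^ p)
          / (k ^ (p + 1) * (k - 1) ^ p)"
    using \<open>k > 1\<close> by (simp add: field_simps power_divide)
  also have "\<dots> \<le> (2 * P) ^ p * C * ((P + 1) * k * (k - 1) ^ p) / (k ^ (p + 1) * (k - 1) ^ p)"
    using key C P \<open>k > 1\<close> by (intro divide_right_mono mult_left_mono) auto
  also have "\<dots> = (P + 1) * (2 * P) ^ p * C / k ^ p"
    using \<open>k > 1\<close> by (simp add: field_simps)
  finally show ?thesis
    unfolding P_def .
qed

lemma sublinear_rate_of_recurrence:
  fixes \<delta> :: "nat \<Rightarrow> real"
  assumes p: "1 \<le> p" and C: "0 \<le> C"
    and rec: "\<And>k t. 0 \<le> t \<Longrightarrow> t \<le> 1 \<Longrightarrow> \<delta> (Suc k) \<le> (1 - t) * \<delta> k + C * t ^ (p + 1)"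
    and k: "2 \<le> k"
  shows "\<delta> k \<le> (real p + 1) * (2 * real p) ^ p * C / (real k - 1) ^ p"
proof -
  define A where "A = (real p + 1) * (2 * real p) ^ p * C"
  have early: "\<delta> (Suc m) \<le> A / real m ^ p" if "1 \<le> m" "real m \<le> 2 * real p" for m
  proof -
    have "real m ^ p \<le> (2 * real p) ^ p"
      using that by (intro power_mono) auto
    also have "\<dots> \<le> (real p + 1) * (2 * real p) ^ p"
      using mult_right_mono[of 1 "real p + 1" "(2 * real p) ^ p"] by simp
    finally have "C * real m ^ p \<le> A"
      using C by (simp add: A_def mult_left_mono mult.commute)
    then have "C \<le> A / real m ^ p"
      using \<open>1 \<le> m\<close> by (simp add: pos_le_divide_eq)
    moreover have "\<delta> (Suc m) \<le> C"
      using rec[of 1 m] by simp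
    ultimately show ?thesis
      by linarith
  qed
  from k show ?thesis
    unfolding A_def[symmetric]
  proof (induction k rule: nat_induct_at_least)
    case base
    then show ?case
      using early[of 1] p by (simp add: numeral_2_eq_2)
  next
    case (Suc m)
    show ?case
    proof (cases "real m \<le> 2 * real p")
      case True
      then show ?thesis
        using early[of m] Suc by simp
    next
      case False
      define t where "t = 2 * real p / real m"
      have t: "0 \<le> t" "t \<le> 1"
        using False by (auto simp: t_def)
      have "\<delta> (Suc m) \<le> (1 - t) * \<delta> m + C * t ^ (p + 1)"
        using rec[OF t] .
      also have "\<dots> \<le> (1 - t) * (A / (real m - 1) ^ p) + C * t ^ (p + 1)"
        using Suc.IH t by (intro add_right_mono mult_left_mono) auto
      also have "\<dots> \<le> A / real m ^ p"
        unfolding t_def A_def using False p C by (intro sublinear_rate_step) auto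
      finally show ?thesis
        by simp
    qed
  qed
qed

locale composite_tensor_problem =
  fixes B :: "'a::euclidean_space \<Rightarrow> 'a" and f :: "'a \<Rightarrow> real"
    and Df :: "nat \<Rightarrow> 'a \<Rightarrow> 'a list \<Rightarrow> real" and h :: "'a \<Rightarrow> ereal"
    and U :: "'a set" and p :: nat and L :: real
  assumes pos_def: "pos_def_op B"
    and order_pos: "1 \<le> p"
    and proper: "proper_closed_convex h"
    and open_U: "open U" and dom_subset: "dom_fun h \<subseteq> U"
    and convex_f: "convex_on U f"
    and derivs: "higher_derivs p f Df U"
    and L_nonneg: "0 \<le> L"
    and Lipschitz: "\<forall>y\<in>dom_fun h. \<forall>z\<in>dom_fun h. \<forall>u. bnorm B u \<le> 1 \<longrightarrow>
              \<bar>Df p y (replicate p u) - Df p z (replicate p u)\<bar> \<le> L * bnorm B (y - z)"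
begin

text \<open>Since real_of_ereal maps \<open>\<infinity>\<close> to 0, F agrees with f + h only on dom_fun h.\<close>

definition F :: "'a \<Rightarrow> real" where
  "F y = f y + real_of_ereal (h y)"

lemma ereal_F: "y \<in> dom_fun h \<Longrightarrow> ereal (f y) + h y = ereal (F y)"
  using proper_closed_convex_finite[OF proper] by (metis F_def plus_ereal.simps(1))

lemma tensor_step_descent:
  assumes x: "x \<in> dom_fun h" and step: "is_tensor_step p B f Df h (real p * L) x x'"
  shows "x' \<in> dom_fun h"
    and "y \<in> dom_fun h \<Longrightarrow> F x' \<le> F y + L / fact p * bnorm B (y - x) ^ (p + 1)"
proof -
  define M where
    "M z = taylor_poly p f Df x z + real p * L / fact (p + 1) * bnorm B (z - x) ^ (p + 1)" for z
  have min: "ereal (M x') + h x' \<le> ereal (M z) + h z" for z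
    using step by (simp add: is_tensor_step_def tensor_model_def M_def)
  show x': "x' \<in> dom_fun h"
    using min[of x] x by (auto simp: dom_fun_def)
  let ?r = "\<lambda>z. bnorm B (z - x) ^ (p + 1)"
  have taylor_error: "\<bar>f z - taylor_poly p f Df x z\<bar> \<le> L / fact (p + 1) * ?r z"
    if "z \<in> dom_fun h" for z
    using taylor_poly_error_bound[OF pos_def derivs _ open_U convex_dom_fun[OF proper] dom_subset
        Lipschitz x that] order_pos by simp
  have "L / fact (p + 1) \<le> real p * L / fact (p + 1)"
    using mult_right_mono[of 1 "real p" L] order_pos L_nonneg by (intro divide_right_mono) auto
  then have regularization: "L / fact (p + 1) * ?r x' \<le> real p * L / fact (p + 1) * ?r x'"
    using bnorm_nonneg[OF pos_def] by (intro mult_right_mono) auto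
  assume y: "y \<in> dom_fun h"
  have "F x' \<le> M x' + real_of_ereal (h x')"
    using taylor_error[OF x'] regularization unfolding F_def M_def by linarith
  also have "\<dots> \<le> M y + real_of_ereal (h y)"
    using min[of y] proper_closed_convex_finite[OF proper] x' y
    by (metis plus_ereal.simps(1) ereal_less_eq(3))
  also have "\<dots> \<le> F y + (L / fact (p + 1) + real p * L / fact (p + 1)) * ?r y"
    using taylor_error[OF y] unfolding F_def M_def distrib_right by linarith
  also have "\<dots> = F y + L / fact p * ?r y"
    by (simp add: divide_simps) (simp add: algebra_simps)
  finally show "F x' \<le> F y + L / fact p * bnorm B (y - x) ^ (p + 1)" .
qed

lemma tensor_step_convex_decrease:
  assumes x: "x \<in> dom_fun h" and z: "z \<in> dom_fun h"
    and step: "is_tensor_step p B f Df h (real p * L) x x'" and t: "0 \<le> t" "t \<le> 1"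
  shows "F x' - F z \<le> (1 - t) * (F x - F z) + L / fact p * (t * bnorm B (x - z)) ^ (p + 1)"
proof -
  define y where "y = (1 - t) *\<^sub>R x + t *\<^sub>R z"
  have y: "y \<in> dom_fun h"
    using convexD_alt[OF convex_dom_fun[OF proper] x z t] by (simp add: y_def)
  have "f y \<le> (1 - t) * f x + t * f z"
    unfolding y_def using convex_onD[OF convex_f t] x z dom_subset by auto
  moreover have "real_of_ereal (h y) \<le> (1 - t) * real_of_ereal (h x) + t * real_of_ereal (h z)"
    using proper_closed_convex_ineq[OF proper x z t] proper_closed_convex_finite[OF proper y]
    unfolding y_def by (metis ereal_less_eq(3))
  moreover have "bnorm B (y - x) = t * bnorm B (x - z)"
    using bnorm_scaleR[OF pos_def, of t "z - x"] bnorm_minus_commute[OF pos_def, of z x] t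
    by (simp add: y_def algebra_simps)
  ultimately show ?thesis
    using tensor_step_descent(2)[OF x step y] unfolding F_def by (simp add: algebra_simps)
qed

lemma tensor_iterates_sublevel:
  assumes "x 0 \<in> dom_fun h" and "\<forall>k. is_tensor_step p B f Df h (real p * L) (x k) (x (Suc k))"
  shows "x k \<in> dom_fun h \<and> F (x k) \<le> F (x 0)"
proof (induction k)
  case 0
  then show ?case
    using assms by simp
next
  case (Suc k)
  then have xk: "x k \<in> dom_fun h"
    by simp
  have step: "is_tensor_step p B f Df h (real p * L) (x k) (x (Suc k))"
    using assms(2) by simp
  have "F (x (Suc k)) \<le> F (x k)"
    using tensor_step_descent(2)[OF xk step xk] bnorm_eq_0_iff[OF pos_def, of 0] order_pos by simp
  then show ?case
    using Suc tensor_step_descent(1)[OF xk step] by simp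
qed

lemma tensor_method_rate:
  assumes x0: "x 0 \<in> dom_fun h"
    and iter: "\<forall>k. is_tensor_step p B f Df h (real p * L) (x k) (x (Suc k))"
    and z: "z \<in> dom_fun h" and dist: "\<And>k. bnorm B (x k - z) \<le> D" and k: "2 \<le> k"
  shows "F (x k) - F z
           \<le> (real p + 1) * (2 * real p) ^ p / fact p * (L * D ^ (p + 1) / (real k - 1) ^ p)"
proof -
  have iterates: "x k \<in> dom_fun h" for k
    using tensor_iterates_sublevel[OF x0 iter] by blast
  have "0 \<le> D"
    using dist[of 0] bnorm_nonneg[OF pos_def, of "x 0 - z"] by linarith
  have "F (x k) - F z
      \<le> (real p + 1) * (2 * real p) ^ p * (L * D ^ (p + 1) / fact p) / (real k - 1) ^ p"
  proof (rule sublinear_rate_of_recurrence[where \<delta> = "\<lambda>k. F (x k) - F z"])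
    fix k :: nat and t :: real
    assume t: "0 \<le> t" "t \<le> 1"
    have "F (x (Suc k)) - F z
        \<le> (1 - t) * (F (x k) - F z) + L / fact p * (t * bnorm B (x k - z)) ^ (p + 1)"
      using tensor_step_convex_decrease[OF iterates z _ t] iter by blast
    also have "\<dots> \<le> (1 - t) * (F (x k) - F z) + L / fact p * (t * D) ^ (p + 1)"
      using dist[of k] t L_nonneg bnorm_nonneg[OF pos_def]
      by (intro add_left_mono mult_left_mono power_mono) auto
    finally show "F (x (Suc k)) - F z
        \<le> (1 - t) * (F (x k) - F z) + L * D ^ (p + 1) / fact p * t ^ (p + 1)"
      by (simp add: power_mult_distrib mult_ac)
  qed (use order_pos L_nonneg \<open>0 \<le> D\<close> k in auto)
  then show ?thesis
    by (simp add: mult_ac)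
qed

end

theorem theorem3:
  fixes B :: "'a::euclidean_space \<Rightarrow> 'a"
    and f :: "'a \<Rightarrow> real" and Df :: "nat \<Rightarrow> 'a \<Rightarrow> 'a list \<Rightarrow> real"
    and h :: "'a \<Rightarrow> ereal" and U :: "'a set"
    and p :: nat and L :: real and xs :: 'a and x :: "nat \<Rightarrow> 'a"
  assumes B: "pos_def_op B"
    and p: "p \<ge> 2"
    and h: "proper_closed_convex h"
    and U: "open U" "convex U" "dom_fun h \<subseteq> U"
    and fconv: "convex_on U f"
    and fdiff: "higher_derivs p f Df U"
    and Lpos: "0 < L"
    and Lip: "\<forall>y\<in>dom_fun h. \<forall>z\<in>dom_fun h. \<forall>u. bnorm B u \<le> 1 \<longrightarrow>
              \<bar>Df p y (replicate p u) - Df p z (replicate p u)\<bar> \<le> L * bnorm B (y - z)"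
    and xs: "\<forall>y. ereal (f xs) + h xs \<le> ereal (f y) + h y"
    and x0: "x 0 \<in> dom_fun h"
    and iter: "\<forall>k. is_tensor_step p B f Df h (real p * L) (x k) (x (Suc k))"
    and Dbdd: "bdd_above ((\<lambda>y. bnorm B (y - xs)) `
                 {y \<in> dom_fun h. ereal (f y) + h y \<le> ereal (f (x 0)) + h (x 0)})"
  shows "\<forall>k\<ge>2. ereal (f (x k)) + h (x k) - (ereal (f xs) + h xs) \<le>
           ereal ((real p + 1) * (2 * real p) ^ p / fact p *
             (L * (SUP y\<in>{y \<in> dom_fun h. ereal (f y) + h y \<le> ereal (f (x 0)) + h (x 0)}.
                     bnorm B (y - xs)) ^ (p + 1) / (real k - 1) ^ p))"
proof -
  interpret composite_tensor_problem B f Df h U p L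
    using assms by unfold_locales auto
  define S where "S = {y \<in> dom_fun h. ereal (f y) + h y \<le> ereal (f (x 0)) + h (x 0)}"
  have iterates: "x k \<in> dom_fun h" "F (x k) \<le> F (x 0)" for k
    using tensor_iterates_sublevel[OF x0 iter] by auto
  have xs_dom: "xs \<in> dom_fun h"
    using xs[rule_format, of "x 0"] ereal_F[OF x0] by (auto simp: dom_fun_def)
  have "bnorm B (x k - xs) \<le> (SUP y\<in>S. bnorm B (y - xs))" for k
    using iterates ereal_F by (intro cSUP_upper[OF _ Dbdd[folded S_def]]) (auto simp: S_def)
  from tensor_method_rate[OF x0 iter xs_dom this]
  show ?thesis
    using ereal_F[OF iterates(1)] ereal_F[OF xs_dom] by (simp add: S_def)
qed

end
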